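(* For every finite set $S\subset\mathbb{R}^2$ in general position, the exit graph of $S$ is supporting for $S$.
   Context: General position: no three points collinear. Two labeled point sets in general position have the same order type under a bijection $\varphi$ if every triple $(p,q,r)$ of distinct points has the same orientation (clockwise or counterclockwise) as $(\varphi(p),\varphi(q),\varphi(r))$. A geometric graph on $S$ is a graph with vertex set $S$ whose edges are drawn as straight segments between their endpoints. An ambient isotopy of $\mathbb{R}^2$ is a continuous map $f:\mathbb{R}^2\times[0,1]\to\mathbb{R}^2$ with $f(\cdot,t)$ a homeomorphism for every $t$ and $f(\cdot,0)$ the identity. A geometric graph $G$ on $S$ is supporting for $S$ if every ambient isotopy $f$ such that for every $t\in[0,1]$ the image under $f(\cdot,t)$ of each edge of $G$ is a straight segment and no four points of $f(S,t)$ are collinear, preserves the order type, i.e. for each $t$ with $f(S,t)$ in general position, $f(S,t)$ has the same order type as $S$ under $s\mapsto f(s,t)$. For distinct $a,b,c\in S$, $ab$ is an exit edge with witness $c$ if there is no $p\in S$ such that the line through $a$ and $p$ strictly separates $b$ from $c$, and no $p\in S$ such that the line through $b$ and $p$ strictly separates $a$ from $c$; $ab$ is an exit edge if it has some witness. The exit graph of $S$ is the geometric graph on $S$ whose edges are the exit edges. *)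

theory Defs
  imports "HOL-Analysis.Analysis"
begin

type_synonym pt = "real \<times> real"

definition orient :: "pt \<Rightarrow> pt \<Rightarrow> pt \<Rightarrow> real" where
  "orient p q r = sgn ((fst q - fst p) * (snd r - snd p) - (snd q - snd p) * (fst r - fst p))"

definition general_position :: "pt set \<Rightarrow> bool" where
  "general_position S \<longleftrightarrow>
     (\<forall>p\<in>S. \<forall>q\<in>S. \<forall>r\<in>S. p \<noteq> q \<and> p \<noteq> r \<and> q \<noteq> r \<longrightarrow> \<not> collinear {p, q, r})"

definition same_order_type :: "pt set \<Rightarrow> (pt \<Rightarrow> pt) \<Rightarrow> bool" where
  "same_order_type S \<phi> \<longleftrightarrow>
     (\<forall>p\<in>S. \<forall>q\<in>S. \<forall>r\<in>S. p \<noteq> q \<and> p \<noteq> r \<and> q \<noteq> r \<longrightarrow>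
        orient (\<phi> p) (\<phi> q) (\<phi> r) = orient p q r)"

definition geometric_graph :: "pt set \<Rightarrow> pt set set \<Rightarrow> bool" where
  "geometric_graph S E \<longleftrightarrow> (\<forall>e\<in>E. e \<subseteq> S \<and> card e = 2)"

definition ambient_isotopy :: "(pt \<times> real \<Rightarrow> pt) \<Rightarrow> bool" where
  "ambient_isotopy f \<longleftrightarrow>
     continuous_on (UNIV \<times> {0..1}) f \<and>
     (\<forall>t\<in>{0..1}. \<exists>g. homeomorphism UNIV UNIV (\<lambda>x. f (x, t)) g) \<and>
     (\<forall>x. f (x, 0) = x)"

definition supporting :: "pt set \<Rightarrow> pt set set \<Rightarrow> bool" where
  "supporting S E \<longleftrightarrow>
     (\<forall>f. ambient_isotopy f \<and>
          (\<forall>t\<in>{0..1}.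
             (\<forall>a b. {a, b} \<in> E \<longrightarrow>
                (\<exists>c d. (\<lambda>x. f (x, t)) ` closed_segment a b = closed_segment c d)) \<and>
             (\<forall>A. A \<subseteq> (\<lambda>x. f (x, t)) ` S \<and> card A = 4 \<longrightarrow> \<not> collinear A))
        \<longrightarrow> (\<forall>t\<in>{0..1}. general_position ((\<lambda>x. f (x, t)) ` S) \<longrightarrow>
                 same_order_type S (\<lambda>x. f (x, t))))"

definition strictly_separates :: "pt \<Rightarrow> pt \<Rightarrow> pt \<Rightarrow> pt \<Rightarrow> bool" where
  "strictly_separates a p b c \<longleftrightarrow> a \<noteq> p \<and> orient a p b * orient a p c < 0"

definition exit_edge_with_witness :: "pt set \<Rightarrow> pt \<Rightarrow> pt \<Rightarrow> pt \<Rightarrow> bool" where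
  "exit_edge_with_witness S a b c \<longleftrightarrow>
     a \<in> S \<and> b \<in> S \<and> c \<in> S \<and> a \<noteq> b \<and> a \<noteq> c \<and> b \<noteq> c \<and>
     \<not> (\<exists>p\<in>S. strictly_separates a p b c) \<and>
     \<not> (\<exists>p\<in>S. strictly_separates b p a c)"

definition exit_edge :: "pt set \<Rightarrow> pt \<Rightarrow> pt \<Rightarrow> bool" where
  "exit_edge S a b \<longleftrightarrow> (\<exists>c. exit_edge_with_witness S a b c)"

definition exit_graph :: "pt set \<Rightarrow> pt set set" where
  "exit_graph S = {{a, b} | a b. exit_edge S a b}"

end

theory Submission
  imports Defs
begin

text \<open>Follow the orientation determinants of all triples along the isotopy and look at the
  first time \<open>\<tau>\<close> at which one of them vanishes. Up to \<open>\<tau>\<close> every triple keeps its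
  orientation, and at \<open>\<tau>\<close> some image point \<open>f y\<close> lies on the segment between two others,
  \<open>f x\<close> and \<open>f z\<close>. No line through \<open>x\<close> or \<open>z\<close> and another point can separate \<open>y\<close> from the
  opposite endpoint (its image would have to meet the collinear triple, creating four collinear
  points), so \<open>xz\<close> is an exit edge with witness \<open>y\<close>. Hence \<open>xz\<close> is mapped onto a segment, which
  then contains \<open>f y\<close>; pulling back, \<open>y\<close> lies on the segment \<open>xz\<close>, contradicting general
  position.\<close>

definition det3 :: "pt \<Rightarrow> pt \<Rightarrow> pt \<Rightarrow> real" where
  "det3 p q r = (fst q - fst p) * (snd r - snd p) - (snd q - snd p) * (fst r - fst p)"

lemma orient_eq_sgn_det3: "orient p q r = sgn (det3 p q r)"
  by (simp add: orient_def det3_def)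

lemma det3_segment_point:
  "det3 a p ((1 - u) *\<^sub>R a + u *\<^sub>R c) = u * det3 a p c"
  by (simp add: det3_def algebra_simps)

lemma collinear_if_det3_eq_0:
  assumes "det3 p q r = 0"
  shows "collinear {p, q, r}"
proof (cases "p = q")
  case True
  then show ?thesis by (simp add: collinear_2)
next
  case False
  have "\<exists>k. r - p = k *\<^sub>R (q - p)"
  proof (cases "fst q = fst p")
    case False
    define k where "k = (fst r - fst p) / (fst q - fst p)"
    have "fst r - fst p = k * (fst q - fst p)" "snd r - snd p = k * (snd q - snd p)"
      using assms False by (simp_all add: k_def det3_def field_simps)
    then show ?thesis by (intro exI[of _ k]) (simp add: prod_eq_iff)
  next
    case True
    with \<open>p \<noteq> q\<close> have "snd q \<noteq> snd p" by (simp add: prod_eq_iff)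
    define k where "k = (snd r - snd p) / (snd q - snd p)"
    have "fst r - fst p = k * (fst q - fst p)" "snd r - snd p = k * (snd q - snd p)"
      using assms True \<open>snd q \<noteq> snd p\<close> by (simp_all add: k_def det3_def)
    then show ?thesis by (intro exI[of _ k]) (simp add: prod_eq_iff)
  qed
  then obtain k where "r = p + k *\<^sub>R (q - p)"
    by (metis add.commute diff_add_cancel)
  then show ?thesis
    unfolding collinear_alt
    by (intro exI[of _ p] exI[of _ "q - p"]) (auto intro: exI[of _ 0] exI[of _ 1])
qed

lemma orient_ne_0_if_general_position:
  assumes "general_position S" "p \<in> S" "q \<in> S" "r \<in> S" "p \<noteq> q" "p \<noteq> r" "q \<noteq> r"
  shows "orient p q r \<noteq> 0"
  using assms collinear_if_det3_eq_0 unfolding general_position_def orient_eq_sgn_det3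
  by (metis sgn_0_0)

lemma mem_segment_if_image_segment:
  fixes F :: "'a::real_vector \<Rightarrow> 'b::real_vector"
  assumes "inj F" and "F ` closed_segment x z = closed_segment c d"
    and "F y \<in> closed_segment (F x) (F z)"
  shows "y \<in> closed_segment x z"
proof -
  have "F x \<in> closed_segment c d" "F z \<in> closed_segment c d"
    using assms(2) by (auto simp flip: assms(2))
  then have "closed_segment (F x) (F z) \<subseteq> closed_segment c d"
    by (simp add: closed_segment_subset)
  with assms have "F y \<in> F ` closed_segment x z" by auto
  with \<open>inj F\<close> show ?thesis by (auto dest: injD)
qed

definition weakly_same_order_type :: "pt set \<Rightarrow> (pt \<Rightarrow> pt) \<Rightarrow> bool" where
  "weakly_same_order_type S \<phi> \<longleftrightarrow>
     (\<forall>p\<in>S. \<forall>q\<in>S. \<forall>r\<in>S. p \<noteq> q \<and> p \<noteq> r \<and> q \<noteq> r \<longrightarrow>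
        orient (\<phi> p) (\<phi> q) (\<phi> r) \<in> {0, orient p q r})"

lemma not_strictly_separates_if_between:
  fixes F :: "pt \<Rightarrow> pt"
  assumes inj: "inj_on F S"
    and no4: "\<forall>A. A \<subseteq> F ` S \<and> card A = 4 \<longrightarrow> \<not> collinear A"
    and weak: "weakly_same_order_type S F"
    and S: "x \<in> S" "y \<in> S" "z \<in> S" "x \<noteq> y" "x \<noteq> z" "y \<noteq> z"
    and between: "F y \<in> closed_segment (F x) (F z)"
  shows "\<not> (\<exists>p\<in>S. strictly_separates x p z y)"
proof
  assume "\<exists>p\<in>S. strictly_separates x p z y"
  then obtain p where p: "p \<in> S" "x \<noteq> p" and sep: "orient x p z * orient x p y < 0"
    unfolding strictly_separates_def by blast
  have "p \<noteq> z" "p \<noteq> y" using sep by (auto simp: orient_def)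
  obtain u where u: "F y = (1 - u) *\<^sub>R F x + u *\<^sub>R F z" "0 \<le> u"
    using between unfolding closed_segment_def by auto
  have "u \<noteq> 0" using u inj S by (auto dest: inj_onD)
  with u have "u > 0" by simp
  have det_y: "det3 (F x) (F p) (F y) = u * det3 (F x) (F p) (F z)"
    by (simp add: u det3_segment_point)
  have "det3 (F x) (F p) (F z) \<noteq> 0"
  proof
    assume "det3 (F x) (F p) (F z) = 0"
    then have "collinear {F x, F z, F p}"
      using collinear_if_det3_eq_0 by (metis insert_commute)
    moreover have "collinear {F x, F z, F y}"
      using between between_imp_collinear[of "F x" "F z" "F y"]
      by (simp add: between_mem_segment insert_commute)
    moreover have "F x \<noteq> F z" using inj S by (auto dest: inj_onD)
    ultimately have "collinear {F x, F z, F p, F y}" by (simp add: collinear_4_3)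
    moreover have "card {F x, F z, F p, F y} = 4"
      using inj S p \<open>p \<noteq> z\<close> \<open>p \<noteq> y\<close> by (auto simp: inj_on_eq_iff)
    ultimately show False using no4 S p by auto
  qed
  then have "orient (F x) (F p) (F y) = orient (F x) (F p) (F z)"
    and "orient (F x) (F p) (F z) \<noteq> 0"
    using det_y \<open>u > 0\<close> by (simp_all add: orient_eq_sgn_det3 sgn_mult sgn_0_0)
  moreover have "orient (F x) (F p) (F y) \<in> {0, orient x p y}"
    and "orient (F x) (F p) (F z) \<in> {0, orient x p z}"
    using weak S p \<open>p \<noteq> z\<close> \<open>p \<noteq> y\<close> unfolding weakly_same_order_type_def by blast+
  ultimately have "orient x p y = orient x p z" by auto
  then show False using sep by (simp add: mult_less_0_iff)
qed

lemma exit_edge_if_between: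
  fixes F :: "pt \<Rightarrow> pt"
  assumes inj: "inj_on F S"
    and no4: "\<forall>A. A \<subseteq> F ` S \<and> card A = 4 \<longrightarrow> \<not> collinear A"
    and weak: "weakly_same_order_type S F"
    and S: "x \<in> S" "y \<in> S" "z \<in> S" "x \<noteq> y" "x \<noteq> z" "y \<noteq> z"
    and between: "F y \<in> closed_segment (F x) (F z)"
  shows "exit_edge_with_witness S x z y"
  using not_strictly_separates_if_between[OF inj no4 weak S between]
    not_strictly_separates_if_between[OF inj no4 weak S(3,2,1) S(6,5,4)[symmetric]]
    between S
  by (simp add: exit_edge_with_witness_def closed_segment_commute)

lemma same_order_type_if_exit_segments_preserved:
  fixes F :: "pt \<Rightarrow> pt"
  assumes gp: "general_position S" and inj: "inj F"
    and no4: "\<forall>A. A \<subseteq> F ` S \<and> card A = 4 \<longrightarrow> \<not> collinear A"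
    and weak: "weakly_same_order_type S F"
    and segments: "\<forall>a b. {a, b} \<in> exit_graph S \<longrightarrow>
                     (\<exists>c d. F ` closed_segment a b = closed_segment c d)"
  shows "same_order_type S F"
  unfolding same_order_type_def
proof (intro ballI impI)
  have not_between: False
    if "x \<in> S" "y \<in> S" "z \<in> S" "x \<noteq> y" "x \<noteq> z" "y \<noteq> z"
       "F y \<in> closed_segment (F x) (F z)" for x y z
  proof -
    have "exit_edge_with_witness S x z y"
      using exit_edge_if_between[OF inj_on_subset[OF inj] no4 weak that] by simp
    then have "{x, z} \<in> exit_graph S" unfolding exit_graph_def exit_edge_def by blast
    then obtain c d where "F ` closed_segment x z = closed_segment c d"
      using segments by blast
    then have "y \<in> closed_segment x z"
      using mem_segment_if_image_segment inj that(7) by blast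
    then have "collinear {x, y, z}"
      using between_imp_collinear by (simp add: between_mem_segment)
    with gp that show False unfolding general_position_def by blast
  qed
  fix a b c assume S: "a \<in> S" "b \<in> S" "c \<in> S" "a \<noteq> b \<and> a \<noteq> c \<and> b \<noteq> c"
  have "\<not> collinear {F a, F b, F c}"
    unfolding collinear_between_cases between_mem_segment
    using not_between S by (metis closed_segment_commute)
  then have "orient (F a) (F b) (F c) \<noteq> 0"
    using collinear_if_det3_eq_0[of "F a" "F b" "F c"] by (auto simp: orient_eq_sgn_det3 sgn_0_0)
  moreover have "orient (F a) (F b) (F c) \<in> {0, orient a b c}"
    using weak S unfolding weakly_same_order_type_def by blast
  ultimately show "orient (F a) (F b) (F c) = orient a b c" by auto
qed

lemma sgn_eq_if_no_zero:
  fixes g :: "real \<Rightarrow> real"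
  assumes "continuous_on {a..b} g" "a \<le> b" "\<forall>s\<in>{a..b}. g s \<noteq> 0"
  shows "sgn (g b) = sgn (g a)"
proof (rule ccontr)
  assume "sgn (g b) \<noteq> sgn (g a)"
  moreover have "g a \<noteq> 0" "g b \<noteq> 0" using assms(2,3) by auto
  ultimately have "g a < 0 \<and> 0 < g b \<or> g b < 0 \<and> 0 < g a"
    by (auto simp: sgn_if split: if_splits)
  then obtain s where "s \<in> {a..b}" "g s = 0"
    using IVT'[of g a 0 b] IVT2'[of g b 0 a] assms(1,2) by force
  with assms(3) show False by blast
qed

text \<open>Only the first time at which some member of the family vanishes has to be examined: up to
  that time every member has kept its initial sign.\<close>

lemma sgn_preserved_by_first_zero:
  fixes g :: "'i \<Rightarrow> real \<Rightarrow> real"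
  assumes "finite I"
    and cont: "\<And>i. i \<in> I \<Longrightarrow> continuous_on {0..1} (g i)"
    and start: "\<And>i. i \<in> I \<Longrightarrow> sgn (g i 0) \<noteq> 0"
    and first_zero: "\<And>\<tau>. \<tau> \<in> {0..1} \<Longrightarrow> \<forall>i\<in>I. sgn (g i \<tau>) \<in> {0, sgn (g i 0)}
                        \<Longrightarrow> \<forall>i\<in>I. sgn (g i \<tau>) = sgn (g i 0)"
    and "i \<in> I" "s \<in> {0..1}"
  shows "sgn (g i s) = sgn (g i 0)"
proof -
  have sgn_kept: "sgn (g i s) = sgn (g i 0)"
    if "i \<in> I" "s \<in> {0..1}" "\<forall>r\<in>{0..<s}. g i r \<noteq> 0" "g i s \<noteq> 0" for i s
  proof (rule sgn_eq_if_no_zero[of 0 s "g i"])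
    show "continuous_on {0..s} (g i)"
      by (rule continuous_on_subset[OF cont[OF \<open>i \<in> I\<close>]]) (use \<open>s \<in> {0..1}\<close> in auto)
    show "\<forall>r\<in>{0..s}. g i r \<noteq> 0"
    proof
      fix r assume "r \<in> {0..s}"
      then have "r \<in> {0..<s} \<or> r = s" by auto
      then show "g i r \<noteq> 0" using that(3,4) by blast
    qed
  qed (use \<open>s \<in> {0..1}\<close> in auto)
  define Z where "Z = (\<Union>i\<in>I. {s \<in> {0..1}. g i s = 0})"
  have "Z = {}"
  proof (rule ccontr)
    assume "Z \<noteq> {}"
    moreover have "bdd_below Z" unfolding Z_def by (rule bdd_belowI[of _ 0]) auto
    moreover have "closed Z"
      unfolding Z_def
      by (intro closed_UN \<open>finite I\<close> ballI continuous_closed_preimage_constant cont) auto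
    ultimately have "Inf Z \<in> Z" by (rule closed_contains_Inf)
    then obtain j where \<tau>: "Inf Z \<in> {0..1}" and j: "j \<in> I" "g j (Inf Z) = 0"
      unfolding Z_def by auto
    have before: "\<forall>r\<in>{0..<Inf Z}. g i r \<noteq> 0" if "i \<in> I" for i
    proof
      fix r assume r: "r \<in> {0..<Inf Z}"
      show "g i r \<noteq> 0"
      proof
        assume "g i r = 0"
        with that r \<tau> have "r \<in> Z" unfolding Z_def by auto
        then have "Inf Z \<le> r" using \<open>bdd_below Z\<close> by (rule cInf_lower)
        with r show False by simp
      qed
    qed
    have "\<forall>i\<in>I. sgn (g i (Inf Z)) \<in> {0, sgn (g i 0)}"
      using sgn_kept[OF _ \<tau> before] by (auto simp: sgn_0_0)
    then have "sgn (g j (Inf Z)) = sgn (g j 0)" using first_zero \<tau> j(1) by blast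
    with j start show False by (simp add: sgn_0_0)
  qed
  then have "\<forall>r\<in>{0..1}. g i r \<noteq> 0"
    using \<open>i \<in> I\<close> unfolding Z_def by blast
  then show ?thesis
    using sgn_kept[OF \<open>i \<in> I\<close> \<open>s \<in> {0..1}\<close>] \<open>s \<in> {0..1}\<close> by auto
qed

definition distinct_triples :: "'a set \<Rightarrow> ('a \<times> 'a \<times> 'a) set" where
  "distinct_triples S = {(p, q, r). p \<in> S \<and> q \<in> S \<and> r \<in> S \<and> p \<noteq> q \<and> p \<noteq> r \<and> q \<noteq> r}"

lemma finite_distinct_triples: "finite S \<Longrightarrow> finite (distinct_triples S)"
  by (rule finite_subset[of _ "S \<times> S \<times> S"]) (auto simp: distinct_triples_def)

lemma Ball_distinct_triples:
  "(\<forall>i\<in>distinct_triples S. P i) \<longleftrightarrow>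
     (\<forall>p\<in>S. \<forall>q\<in>S. \<forall>r\<in>S. p \<noteq> q \<and> p \<noteq> r \<and> q \<noteq> r \<longrightarrow> P (p, q, r))"
  unfolding distinct_triples_def by blast

lemma ambient_isotopy_slice_inj:
  assumes "ambient_isotopy f" "t \<in> {0..1}"
  shows "inj (\<lambda>x. f (x, t))"
proof -
  obtain h where "homeomorphism UNIV UNIV (\<lambda>x. f (x, t)) h"
    using assms unfolding ambient_isotopy_def by blast
  then have "h (f (x, t)) = x" for x
    using homeomorphism_apply1[of UNIV UNIV "\<lambda>x. f (x, t)" h x] by simp
  then show ?thesis by (rule inj_on_inverseI)
qed

lemma ambient_isotopy_continuous_track:
  assumes "ambient_isotopy f"
  shows "continuous_on {0..1} (\<lambda>s. f (x, s))"
proof -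
  have "continuous_on (UNIV \<times> {0..1}) f"
    using assms unfolding ambient_isotopy_def by (rule conjunct1)
  moreover have "continuous_on {0..1} (\<lambda>s. (x, s))"
    by (intro continuous_intros)
  moreover have "(\<lambda>s. (x, s)) ` {0..1} \<subseteq> UNIV \<times> {0..1}" by auto
  ultimately show ?thesis by (rule continuous_on_compose2)
qed

lemma same_order_type_along_isotopy:
  assumes "finite S" and gp: "general_position S" and iso: "ambient_isotopy f"
    and segments: "\<forall>\<tau>\<in>{0..1}. \<forall>a b. {a, b} \<in> exit_graph S \<longrightarrow>
                     (\<exists>c d. (\<lambda>x. f (x, \<tau>)) ` closed_segment a b = closed_segment c d)"
    and no4: "\<forall>\<tau>\<in>{0..1}. \<forall>A. A \<subseteq> (\<lambda>x. f (x, \<tau>)) ` S \<and> card A = 4 \<longrightarrow> \<not> collinear A"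
    and t: "t \<in> {0..1}"
  shows "same_order_type S (\<lambda>x. f (x, t))"
proof -
  define g where "g i s = det3 (f (fst i, s)) (f (fst (snd i), s)) (f (snd (snd i), s))" for i s
  have sgn_g: "sgn (g (p, q, r) s) = orient (f (p, s)) (f (q, s)) (f (r, s))" for p q r s
    by (simp add: g_def orient_eq_sgn_det3)
  have at_0: "f (x, 0) = x" for x
    using iso unfolding ambient_isotopy_def by blast
  have first_zero: "\<forall>i\<in>distinct_triples S. sgn (g i \<tau>) = sgn (g i 0)"
    if \<tau>: "\<tau> \<in> {0..1}" and "\<forall>i\<in>distinct_triples S. sgn (g i \<tau>) \<in> {0, sgn (g i 0)}" for \<tau>
  proof -
    have weak: "weakly_same_order_type S (\<lambda>x. f (x, \<tau>))"
      using that(2) by (simp only: weakly_same_order_type_def Ball_distinct_triples sgn_g at_0)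
    have "same_order_type S (\<lambda>x. f (x, \<tau>))"
      by (rule same_order_type_if_exit_segments_preserved
          [OF gp ambient_isotopy_slice_inj[OF iso \<tau>] _ weak])
        (use segments no4 \<tau> in blast)+
    then show ?thesis by (simp only: same_order_type_def Ball_distinct_triples sgn_g at_0)
  qed
  have start: "\<forall>i\<in>distinct_triples S. sgn (g i 0) \<noteq> 0"
    by (simp only: Ball_distinct_triples sgn_g at_0)
      (use orient_ne_0_if_general_position[OF gp] in blast)
  have cont: "continuous_on {0..1} (g i)" for i
    unfolding g_def det3_def by (intro continuous_intros ambient_isotopy_continuous_track[OF iso])
  have "\<forall>i\<in>distinct_triples S. sgn (g i t) = sgn (g i 0)"
    using sgn_preserved_by_first_zero[OF finite_distinct_triples[OF \<open>finite S\<close>]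
        cont start[rule_format] first_zero _ t]
    by blast
  then show ?thesis
    by (simp only: same_order_type_def Ball_distinct_triples sgn_g at_0)
qed

theorem mainTheorem5:
  assumes "finite S" and "general_position S"
  shows "supporting S (exit_graph S)"
  unfolding supporting_def
  by (intro allI impI ballI, elim conjE) (rule same_order_type_along_isotopy[OF assms]; blast)

end
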